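(* For every integer $\ell\ge 1$, the graph $H_\ell$ is $3$-regular, planar, $2$-edge-connected, and has $2^{\ell+1}+2^\ell-2$ vertices.
   Context: For an integer $\ell\ge 1$, $H_\ell$ is the graph with vertex set $V_\ell=\{v_{h,j} : h\in\{-\ell,\dots,\ell\},\ j\in\{1,\dots,2^{\ell-|h|}\}\}$ and with the following edges: (1) $v_{h,j}v_{h-1,2j-1}$ and $v_{h,j}v_{h-1,2j}$ for every $h\in\{1,\dots,\ell\}$ and $j\in\{1,\dots,2^{\ell-h}\}$; (2) $v_{h,j}v_{h+1,2j-1}$ and $v_{h,j}v_{h+1,2j}$ for every $h\in\{-\ell,\dots,-1\}$ and $j\in\{1,\dots,2^{\ell-|h|}\}$; (3) the edge $v_{\ell,1}v_{-\ell,1}$; (4) the edges $v_{0,2j-1}v_{0,2j}$ for every $j\in\{1,\dots,2^{\ell-1}\}$. *)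

theory Defs
  imports "HOL-Analysis.Analysis"
begin

text \<open>Finite simple graphs are given by a vertex set V and an edge set E of
  two-element subsets of V.  Vertex v_{h,j} of H_l is the pair (h, j).\<close>

type_synonym hvert = "int \<times> nat"

definition H_verts :: "nat \<Rightarrow> hvert set" where
  "H_verts l = {(h, j). - int l \<le> h \<and> h \<le> int l \<and> 1 \<le> j \<and> j \<le> 2 ^ nat (int l - \<bar>h\<bar>)}"

definition H_edges :: "nat \<Rightarrow> hvert set set" where
  "H_edges l =
     {{(h, j), (h - 1, 2 * j - 1)} | h j. 1 \<le> h \<and> h \<le> int l \<and> 1 \<le> j \<and> j \<le> 2 ^ nat (int l - h)}
   \<union> {{(h, j), (h - 1, 2 * j)} | h j. 1 \<le> h \<and> h \<le> int l \<and> 1 \<le> j \<and> j \<le> 2 ^ nat (int l - h)}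
   \<union> {{(h, j), (h + 1, 2 * j - 1)} | h j. - int l \<le> h \<and> h \<le> -1 \<and> 1 \<le> j \<and> j \<le> 2 ^ nat (int l - \<bar>h\<bar>)}
   \<union> {{(h, j), (h + 1, 2 * j)} | h j. - int l \<le> h \<and> h \<le> -1 \<and> 1 \<le> j \<and> j \<le> 2 ^ nat (int l - \<bar>h\<bar>)}
   \<union> {{(int l, 1), (- int l, 1)}}
   \<union> {{(0, 2 * j - 1), (0, 2 * j)} | j. 1 \<le> j \<and> j \<le> 2 ^ (l - 1)}"

definition degree :: "'a set set \<Rightarrow> 'a \<Rightarrow> nat" where
  "degree E v = card {e \<in> E. v \<in> e}"

definition regular :: "nat \<Rightarrow> 'a set \<Rightarrow> 'a set set \<Rightarrow> bool" where
  "regular k V E \<longleftrightarrow> (\<forall>v\<in>V. degree E v = k)"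

definition adj_rel :: "'a set set \<Rightarrow> ('a \<times> 'a) set" where
  "adj_rel E = {(u, v). {u, v} \<in> E \<and> u \<noteq> v}"

definition connected_graph :: "'a set \<Rightarrow> 'a set set \<Rightarrow> bool" where
  "connected_graph V E \<longleftrightarrow> V \<noteq> {} \<and> (\<forall>u\<in>V. \<forall>v\<in>V. (u, v) \<in> (adj_rel E)\<^sup>*)"

definition k_edge_connected :: "nat \<Rightarrow> 'a set \<Rightarrow> 'a set set \<Rightarrow> bool" where
  "k_edge_connected k V E \<longleftrightarrow> card V \<ge> 2 \<and>
     (\<forall>F. F \<subseteq> E \<and> card F < k \<longrightarrow> connected_graph V (E - F))"

definition planar :: "'a set \<Rightarrow> 'a set set \<Rightarrow> bool" where
  "planar V E \<longleftrightarrow> (\<exists>(p :: 'a \<Rightarrow> complex) (\<gamma> :: 'a set \<Rightarrow> real \<Rightarrow> complex).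
     inj_on p V \<and>
     (\<forall>e\<in>E. \<exists>u v. e = {u, v} \<and> u \<noteq> v \<and> arc (\<gamma> e) \<and>
        pathstart (\<gamma> e) = p u \<and> pathfinish (\<gamma> e) = p v \<and>
        path_image (\<gamma> e) \<inter> p ` V = {p u, p v}) \<and>
     (\<forall>e\<in>E. \<forall>e'\<in>E. e \<noteq> e' \<longrightarrow> path_image (\<gamma> e) \<inter> path_image (\<gamma> e') \<subseteq> p ` (e \<inter> e')))"

end

theory Submission
  imports Defs
begin

(* The graph H_l consists of two complete binary trees of depth l, rooted at v_{l,1} and
   v_{-l,1}, that share their 2^l leaves on level 0; the roots are joined by an edge and the
   leaves are paired by a perfect matching.  Every vertex has a parent (for a root: the other
   root) and two further neighbours (its children; for a leaf: its parent in the other tree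
   and its partner), so H_l is 3-regular, and the level sizes 2^(l-|h|) add up to the vertex
   count.  Climbing a tree joins every vertex to a root, so H_l is connected, and every edge
   lies on a cycle that climbs one tree, crosses the root edge and returns through the other
   tree, so no edge is a bridge.  For planarity draw v_{h,j} at height h and abscissa
   (2j-1) 2^|h|, and both roots at abscissa -1: a tree edge is a segment inside a unit strip
   between two consecutive levels, edges in the same strip preserve the left-to-right order
   of their endpoints and hence do not cross, the matching edges are disjoint horizontal
   segments on level 0, and the root edge is the leftmost, vertical segment.  Negating the
   level is an automorphism of H_l and transfers the arguments from the upper to the lower
   tree. *)

section \<open>Graphs\<close>

lemma sym_adj_rel: "sym (adj_rel E)"
  unfolding sym_def adj_rel_def by (auto simp: insert_commute)

lemma adj_rtrancl_sym: "(u, v) \<in> (adj_rel E)\<^sup>* \<Longrightarrow> (v, u) \<in> (adj_rel E)\<^sup>*"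
  using sym_rtrancl[OF sym_adj_rel] by (rule symD)

lemma edge_adj_rtrancl: "{u, v} \<in> E \<Longrightarrow> (u, v) \<in> (adj_rel E)\<^sup>*"
proof (cases "u = v")
  case False
  assume "{u, v} \<in> E"
  with False have "(u, v) \<in> adj_rel E" by (simp add: adj_rel_def)
  then show ?thesis by (rule r_into_rtrancl)
qed simp

lemma adj_rtrancl_Diff_edge:
  assumes "(x, y) \<in> (adj_rel E)\<^sup>*" and ab: "(a, b) \<in> (adj_rel (E - {{a, b}}))\<^sup>*"
  shows "(x, y) \<in> (adj_rel (E - {{a, b}}))\<^sup>*"
  using assms(1)
proof (induction rule: rtrancl_induct)
  case base
  show ?case by simp
next
  case (step y z)
  have "(y, z) \<in> (adj_rel (E - {{a, b}}))\<^sup>*"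
  proof (cases "{y, z} = {a, b}")
    case True
    then have "(y, z) = (a, b) \<or> (y, z) = (b, a)" by (simp add: doubleton_eq_iff)
    then show ?thesis using ab adj_rtrancl_sym[OF ab] by (elim disjE) simp_all
  next
    case False
    then show ?thesis using step.hyps(2) by (intro r_into_rtrancl) (auto simp: adj_rel_def)
  qed
  with step.IH show ?case by (rule rtrancl_trans)
qed

lemma k_edge_connected_2I:
  assumes "finite E" "2 \<le> card V" and conn: "connected_graph V E"
    and cycle: "\<And>e. e \<in> E \<Longrightarrow> \<exists>a b. e = {a, b} \<and> (a, b) \<in> (adj_rel (E - {e}))\<^sup>*"
  shows "k_edge_connected 2 V E"
  unfolding k_edge_connected_def
proof (intro conjI allI impI)
  fix F assume F: "F \<subseteq> E \<and> card F < 2"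
  then have "finite F" using \<open>finite E\<close> finite_subset by blast
  with F have "F = {} \<or> (\<exists>e. F = {e})"
    by (metis One_nat_def card_0_eq card_1_singleton_iff less_2_cases)
  then show "connected_graph V (E - F)"
  proof
    assume "\<exists>e. F = {e}"
    then obtain e where "F = {e}" by blast
    with F have "e \<in> E" by blast
    from cycle[OF this] obtain a b
      where e: "e = {a, b}" and ab: "(a, b) \<in> (adj_rel (E - {{a, b}}))\<^sup>*"
      by blast
    have "(u, v) \<in> (adj_rel (E - {{a, b}}))\<^sup>*" if "u \<in> V" "v \<in> V" for u v
      using conn that unfolding connected_graph_def by (blast intro: adj_rtrancl_Diff_edge[OF _ ab])
    moreover have "V \<noteq> {}" using conn unfolding connected_graph_def by simp
    ultimately show ?thesis
      unfolding connected_graph_def \<open>F = {e}\<close> e by simp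
  next
    assume "F = {}"
    then show ?thesis using conn by simp
  qed
next
  show "2 \<le> card V" by (rule assms(2))
qed

lemma inj_image_image: "inj f \<Longrightarrow> inj ((`) f)"
  by (simp add: inj_def inj_image_eq_iff)

lemma adj_rtrancl_image:
  assumes "inj f" "(u, v) \<in> (adj_rel E)\<^sup>*"
  shows "(f u, f v) \<in> (adj_rel ((`) f ` E))\<^sup>*"
  using assms(2)
proof (induction rule: rtrancl_induct)
  case (step y z)
  then have "{y, z} \<in> E" and "y \<noteq> z" by (simp_all add: adj_rel_def)
  then have "f ` {y, z} \<in> (`) f ` E" and "f y \<noteq> f z"
    using \<open>inj f\<close> by (blast, simp add: inj_eq)
  then have "(f y, f z) \<in> adj_rel ((`) f ` E)"
    by (simp add: adj_rel_def)
  with step.IH show ?case by (rule rtrancl_into_rtrancl)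
qed simp

lemma degree_image:
  assumes "inj f"
  shows "degree ((`) f ` E) (f v) = degree E v"
proof -
  have "{e' \<in> (`) f ` E. f v \<in> e'} = (`) f ` {e \<in> E. v \<in> e}"
    using assms by (auto simp: inj_image_mem_iff dest: injD)
  then show ?thesis
    unfolding degree_def
    using card_image[OF inj_on_subset[OF inj_image_image[OF assms] subset_UNIV]] by simp
qed

lemma card_three_edges:
  assumes "a \<noteq> b" "a \<noteq> c" "b \<noteq> c"
  shows "card {{v, a}, {v, b}, {v, c}} = 3"
  using assms by (simp add: doubleton_eq_iff)

section \<open>Straight-line drawings\<close>

lemma closed_segment_coords:
  fixes a b z :: complex
  assumes "z \<in> closed_segment a b"
  shows "\<exists>u. 0 \<le> u \<and> u \<le> 1 \<and> Re z = (1 - u) * Re a + u * Re b \<and> Im z = (1 - u) * Im a + u * Im b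
     \<and> (u = 0 \<longrightarrow> z = a) \<and> (u = 1 \<longrightarrow> z = b)"
  using assms unfolding closed_segment_def by auto

lemma closed_segment_unit_rise:
  fixes a b z :: complex
  assumes "z \<in> closed_segment a b" "Im b = Im a + 1"
  shows "Im a \<le> Im z \<and> Im z \<le> Im a + 1 \<and> (Im z = Im a \<longrightarrow> z = a) \<and> (Im z = Im a + 1 \<longrightarrow> z = b)"
proof -
  obtain u where u: "0 \<le> u" "u \<le> 1" "Im z = (1 - u) * Im a + u * Im b"
     "u = 0 \<longrightarrow> z = a" "u = 1 \<longrightarrow> z = b"
    using closed_segment_coords[OF assms(1)] by blast
  have "Im z = Im a + u" using u(3) assms(2) by (simp add: algebra_simps)
  then show ?thesis using u by auto
qed

lemma closed_segment_unit_rise_int_Im: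
  fixes a b w :: complex
  assumes "w \<in> closed_segment a b" "Im b = Im a + 1" "Im a = of_int k" "Im w = of_int m"
  shows "w = a \<or> w = b"
proof -
  note rise = closed_segment_unit_rise[OF assms(1,2)]
  with assms(3,4) have "of_int k \<le> (of_int m :: real)" "(of_int m :: real) \<le> of_int k + 1" by auto
  then have "m = k \<or> m = k + 1" by linarith
  with rise assms show ?thesis by auto
qed

lemma closed_segment_Re_minus_one:
  fixes a b z :: complex
  assumes "z \<in> closed_segment a b" "Re a \<ge> -1" "Re b \<ge> 1" "Re z = -1"
  shows "z = a"
proof -
  obtain u where u: "0 \<le> u" "u \<le> 1" "Re z = (1 - u) * Re a + u * Re b"
     "u = 0 \<longrightarrow> z = a"
    using closed_segment_coords[OF assms(1)] by blast
  have "(1 - u) * Re a \<ge> (1 - u) * (-1)" using u assms by (intro mult_left_mono) auto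
  moreover have "u * Re b \<ge> u * 1" using u assms by (intro mult_left_mono) auto
  ultimately have "u \<le> 0" using u(3) assms(4) by (simp add: algebra_simps)
  then show ?thesis using u by auto
qed

lemma closed_segment_Re_between:
  fixes a b z :: complex
  assumes "z \<in> closed_segment a b" "Re a \<le> Re b"
  shows "Re a \<le> Re z \<and> Re z \<le> Re b"
proof -
  obtain u where u: "0 \<le> u" "u \<le> 1" "Re z = (1 - u) * Re a + u * Re b"
    using closed_segment_coords[OF assms(1)] by blast
  have "Re z = Re a + u * (Re b - Re a)" using u(3) by (simp add: algebra_simps)
  moreover have "u * (Re b - Re a) \<ge> 0" using u assms by simp
  moreover have "u * (Re b - Re a) \<le> 1 * (Re b - Re a)" using u assms by (intro mult_right_mono) auto
  ultimately show ?thesis by auto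
qed

lemma closed_segment_Im_const:
  fixes a b z :: complex
  assumes "z \<in> closed_segment a b" "Im a = c" "Im b = c"
  shows "Im z = c"
proof -
  obtain u where u: "Im z = (1 - u) * Im a + u * Im b"
    using closed_segment_coords[OF assms(1)] by blast
  then show ?thesis using assms by (simp add: algebra_simps)
qed

lemma closed_segment_Re_const:
  fixes a b z :: complex
  assumes "z \<in> closed_segment a b" "Re a = c" "Re b = c"
  shows "Re z = c"
proof -
  obtain u where u: "Re z = (1 - u) * Re a + u * Re b"
    using closed_segment_coords[OF assms(1)] by blast
  then show ?thesis using assms by (simp add: algebra_simps)
qed

lemma closed_segments_unit_rise_inter:
  fixes a b a' b' z :: complex
  assumes "z \<in> closed_segment a b" "z \<in> closed_segment a' b'"
    "Im a' = Im a" "Im b = Im a + 1" "Im b' = Im a + 1"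
    "Re a \<le> Re a'" "Re b \<le> Re b'" "Re a < Re a' \<or> Re b < Re b'"
  shows "z = a \<or> z = b"
proof -
  obtain u where u: "0 \<le> u" "u \<le> 1" "Re z = (1 - u) * Re a + u * Re b" "Im z = (1 - u) * Im a + u * Im b"
     "u = 0 \<longrightarrow> z = a" "u = 1 \<longrightarrow> z = b"
    using closed_segment_coords[OF assms(1)] by blast
  obtain v where v: "0 \<le> v" "v \<le> 1" "Re z = (1 - v) * Re a' + v * Re b'" "Im z = (1 - v) * Im a' + v * Im b'"
    using closed_segment_coords[OF assms(2)] by blast
  have "Im z = Im a + u" using u(4) assms by (simp add: algebra_simps)
  moreover have "Im z = Im a + v" using v(4) assms by (simp add: algebra_simps)
  ultimately have uv: "u = v" by simp
  have eq: "(1 - u) * (Re a' - Re a) + u * (Re b' - Re b) = 0"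
    using u(3) v(3) uv by (simp add: algebra_simps)
  have t1: "(1 - u) * (Re a' - Re a) \<ge> 0" using u assms by simp
  have t2: "u * (Re b' - Re b) \<ge> 0" using u assms by simp
  have z1: "(1 - u) * (Re a' - Re a) = 0" and z2: "u * (Re b' - Re b) = 0" using eq t1 t2 by linarith+
  from assms(8) show ?thesis
  proof
    assume "Re a < Re a'" then have "u = 1" using z1 by simp
    then show ?thesis using u by auto
  next
    assume "Re b < Re b'" then have "u = 0" using z2 by simp
    then show ?thesis using u by auto
  qed
qed

lemma obtain_edge_ends:
  assumes "\<And>e. e \<in> E \<Longrightarrow> \<exists>u v. e = {u, v} \<and> u \<noteq> v \<and> u \<in> V \<and> v \<in> V"
  obtains a b where "\<And>e. e \<in> E \<Longrightarrow> e = {a e, b e} \<and> a e \<noteq> b e \<and> a e \<in> V \<and> b e \<in> V"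
proof -
  have "\<forall>e\<in>E. \<exists>uv. e = {fst uv, snd uv} \<and> fst uv \<noteq> snd uv \<and> fst uv \<in> V \<and> snd uv \<in> V"
  proof
    fix e assume "e \<in> E"
    then obtain u v where "e = {u, v}" "u \<noteq> v" "u \<in> V" "v \<in> V" using assms by blast
    then show "\<exists>uv. e = {fst uv, snd uv} \<and> fst uv \<noteq> snd uv \<and> fst uv \<in> V \<and> snd uv \<in> V"
      by (intro exI[of _ "(u, v)"]) simp
  qed
  from bchoice[OF this] obtain ends where "\<forall>e\<in>E.
      e = {fst (ends e), snd (ends e)} \<and> fst (ends e) \<noteq> snd (ends e) \<and> fst (ends e) \<in> V \<and> snd (ends e) \<in> V"
    by blast
  then show ?thesis using that[of "fst \<circ> ends" "snd \<circ> ends"] by simp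
qed

lemma planar_straight_line:
  fixes p :: "'a \<Rightarrow> complex"
  assumes inj: "inj_on p V"
    and edges: "\<And>e. e \<in> E \<Longrightarrow> \<exists>u v. e = {u, v} \<and> u \<noteq> v \<and> u \<in> V \<and> v \<in> V"
    and vertices: "\<And>e. e \<in> E \<Longrightarrow> convex hull (p ` e) \<inter> p ` V \<subseteq> p ` e"
    and crossings: "\<And>e e'. e \<in> E \<Longrightarrow> e' \<in> E \<Longrightarrow> e \<noteq> e' \<Longrightarrow>
       convex hull (p ` e) \<inter> convex hull (p ` e') \<subseteq> p ` V"
  shows "planar V E"
proof -
  obtain a b where ends: "\<And>e. e \<in> E \<Longrightarrow> e = {a e, b e} \<and> a e \<noteq> b e \<and> a e \<in> V \<and> b e \<in> V"
    using obtain_edge_ends[OF edges] by blast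
  define g where "g e = linepath (p (a e)) (p (b e))" for e
  have image_ends: "p ` e = {p (a e), p (b e)}" if "e \<in> E" for e
    using ends[OF that] by (metis image_empty image_insert)
  have image_g: "path_image (g e) = convex hull (p ` e)" if "e \<in> E" for e
    using image_ends[OF that] by (simp add: g_def segment_convex_hull)
  show ?thesis unfolding planar_def
  proof (intro exI[of _ p] exI[of _ g] conjI ballI impI)
    fix e assume e: "e \<in> E"
    let ?u = "a e" and ?v = "b e"
    have uv: "e = {?u, ?v}" "?u \<noteq> ?v" "?u \<in> V" "?v \<in> V" using ends[OF e] by auto
    have "p ?u \<noteq> p ?v" using uv inj by (meson inj_on_def)
    moreover have "path_image (g e) \<inter> p ` V = {p ?u, p ?v}"
      using vertices[OF e] hull_subset[of "p ` e" convex] uv(3,4)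
      unfolding image_g[OF e] image_ends[OF e] by auto
    ultimately show "\<exists>u v. e = {u, v} \<and> u \<noteq> v \<and> arc (g e) \<and> pathstart (g e) = p u \<and>
       pathfinish (g e) = p v \<and> path_image (g e) \<inter> p ` V = {p u, p v}"
      using uv(1,2) by (intro exI[of _ ?u] exI[of _ ?v]) (simp add: g_def arc_linepath)
  next
    fix e e' assume e: "e \<in> E" and e': "e' \<in> E" and "e \<noteq> e'"
    show "path_image (g e) \<inter> path_image (g e') \<subseteq> p ` (e \<inter> e')"
    proof
      fix z assume "z \<in> path_image (g e) \<inter> path_image (g e')"
      then have z: "z \<in> convex hull (p ` e)" "z \<in> convex hull (p ` e')" "z \<in> p ` V"
        using crossings[OF e e' \<open>e \<noteq> e'\<close>] image_g e e' by auto
      then obtain x y where "x \<in> e" "y \<in> e'" "z = p x" "z = p y"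
        using vertices[OF e] vertices[OF e'] by blast
      moreover have "e \<subseteq> V" "e' \<subseteq> V" using ends e e' by (metis empty_subsetI insert_subset)+
      then have "x \<in> V" "y \<in> V" using \<open>x \<in> e\<close> \<open>y \<in> e'\<close> by blast+
      ultimately show "z \<in> p ` (e \<inter> e')" using inj by (metis IntI imageI inj_on_def)
    qed
  qed (rule inj)
qed


section \<open>The graph \<open>H\<^sub>l\<close>\<close>

lemma mem_H_verts [simp]:
  "(h, j) \<in> H_verts l \<longleftrightarrow> - int l \<le> h \<and> h \<le> int l \<and> 1 \<le> j \<and> j \<le> 2 ^ nat (int l - \<bar>h\<bar>)"
  unfolding H_verts_def by simp

definition upper_child :: "nat \<Rightarrow> int \<Rightarrow> nat \<Rightarrow> nat \<Rightarrow> bool" where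
  "upper_child l h j c \<longleftrightarrow>
     (1 \<le> h \<and> h \<le> int l \<and> 1 \<le> j \<and> j \<le> 2 ^ nat (int l - h)) \<and> (c = 2 * j - 1 \<or> c = 2 * j)"

definition lower_child :: "nat \<Rightarrow> int \<Rightarrow> nat \<Rightarrow> nat \<Rightarrow> bool" where
  "lower_child l h j c \<longleftrightarrow>
     (- int l \<le> h \<and> h \<le> -1 \<and> 1 \<le> j \<and> j \<le> 2 ^ nat (int l - \<bar>h\<bar>)) \<and> (c = 2 * j - 1 \<or> c = 2 * j)"

lemma lower_child_iff: "lower_child l h j c \<longleftrightarrow> upper_child l (- h) j c"
  unfolding lower_child_def upper_child_def by auto

lemma union_Collect_two_choices:
  "{f h j (g1 j) | h j. P h j} \<union> {f h j (g2 j) | h j. P h j} =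
   {f h j c | h j c. P h j \<and> (c = g1 j \<or> c = g2 j)}"
  by blast

lemma H_edges_iff:
  "e \<in> H_edges l \<longleftrightarrow>
     (\<exists>h j c. e = {(h, j), (h - 1, c)} \<and> upper_child l h j c) \<or>
     (\<exists>h j c. e = {(h, j), (h + 1, c)} \<and> lower_child l h j c) \<or>
     e = {(int l, 1), (- int l, 1)} \<or>
     (\<exists>j. e = {(0, 2 * j - 1), (0, 2 * j)} \<and> 1 \<le> j \<and> j \<le> 2 ^ (l - 1))"
proof -
  have "H_edges l =
      {{(h, j), (h - 1, c)} | h j c. upper_child l h j c} \<union>
      {{(h, j), (h + 1, c)} | h j c. lower_child l h j c} \<union>
      {{(int l, 1), (- int l, 1)}} \<union>
      {{(0, 2 * j - 1), (0, 2 * j)} | j. 1 \<le> j \<and> j \<le> 2 ^ (l - 1)}"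
    unfolding H_edges_def upper_child_def lower_child_def
    apply (subst union_Collect_two_choices[symmetric, where f = "\<lambda>h j c. {(h, j), (h - 1, c)}"])
    apply (subst union_Collect_two_choices[symmetric, where f = "\<lambda>h j c. {(h, j), (h + 1, c)}"])
    by (simp only: Un_assoc)
  then show ?thesis
    by (simp only: Un_iff mem_Collect_eq singleton_iff disj_assoc)
qed

lemma upper_edge_in_H_edges: "upper_child l h j c \<Longrightarrow> {(h, j), (h - 1, c)} \<in> H_edges l"
  and lower_edge_in_H_edges: "lower_child l h j c \<Longrightarrow> {(h, j), (h + 1, c)} \<in> H_edges l"
  and root_edge_in_H_edges: "{(int l, 1), (- int l, 1)} \<in> H_edges l"
  and matching_edge_in_H_edges:
    "1 \<le> j \<Longrightarrow> j \<le> 2 ^ (l - 1) \<Longrightarrow> {(0, 2 * j - 1), (0, 2 * j)} \<in> H_edges l"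
  unfolding H_edges_iff by blast+

lemma two_power_nat_Suc: "0 \<le> d \<Longrightarrow> (2::nat) ^ nat (d + 1) = 2 * 2 ^ nat d"
  by (simp add: nat_add_distrib)

lemma upper_child_verts:
  assumes "upper_child l h j c"
  shows "(h, j) \<in> H_verts l" and "(h - 1, c) \<in> H_verts l"
proof -
  have h: "1 \<le> h" "h \<le> int l" "1 \<le> j" "j \<le> 2 ^ nat (int l - h)" "c = 2 * j - 1 \<or> c = 2 * j"
    using assms unfolding upper_child_def by auto
  have "(2::nat) ^ nat (int l - (h - 1)) = 2 * 2 ^ nat (int l - h)"
    using two_power_nat_Suc[of "int l - h"] h by (simp add: algebra_simps)
  then show "(h, j) \<in> H_verts l" "(h - 1, c) \<in> H_verts l" using h by auto
qed

lemma lower_child_verts: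
  assumes "lower_child l h j c"
  shows "(h, j) \<in> H_verts l" and "(h + 1, c) \<in> H_verts l"
proof -
  have "\<bar>- h - 1\<bar> = \<bar>h + 1\<bar>" by arith
  then show "(h, j) \<in> H_verts l" "(h + 1, c) \<in> H_verts l"
    using upper_child_verts[of l "- h" j c] assms by (auto simp: lower_child_iff)
qed

lemma upper_child_parent_eq: "upper_child l h j c \<Longrightarrow> j = (c + 1) div 2"
  unfolding upper_child_def by presburger

lemma upper_child_of_parent:
  assumes "(k, c) \<in> H_verts l" "0 \<le> k" "k < int l"
  shows "upper_child l (k + 1) ((c + 1) div 2) c"
proof -
  have "(2::nat) ^ nat (int l - k) = 2 * 2 ^ nat (int l - (k + 1))"
    using two_power_nat_Suc[of "int l - (k + 1)"] assms by (simp add: algebra_simps)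
  with assms have "1 \<le> c" "c \<le> 2 * 2 ^ nat (int l - (k + 1))" by auto
  then have "1 \<le> (c + 1) div 2" "(c + 1) div 2 \<le> 2 ^ nat (int l - (k + 1))"
    "c = 2 * ((c + 1) div 2) - 1 \<or> c = 2 * ((c + 1) div 2)"
    by presburger+
  with assms show ?thesis unfolding upper_child_def by auto
qed

lemma H_edge_subset_H_verts:
  assumes "l \<ge> 1" "e \<in> H_edges l"
  shows "e \<subseteq> H_verts l"
  using assms(2) unfolding H_edges_iff
proof (elim disjE exE conjE)
  fix j assume "e = {(0, 2 * j - 1), (0, 2 * j)}" "1 \<le> j" "j \<le> 2 ^ (l - 1)"
  moreover have "(2::nat) ^ l = 2 * 2 ^ (l - 1)" using \<open>l \<ge> 1\<close> by (cases l) auto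
  ultimately show ?thesis by auto
qed (use upper_child_verts lower_child_verts in auto)

lemma H_verts_Sigma: "H_verts l = Sigma {- int l..int l} (\<lambda>h. {1..2 ^ nat (int l - \<bar>h\<bar>)})"
  unfolding H_verts_def by auto

lemma finite_H_verts: "finite (H_verts l)"
  unfolding H_verts_Sigma by simp

lemma finite_H_edges: "l \<ge> 1 \<Longrightarrow> finite (H_edges l)"
  using H_edge_subset_H_verts finite_H_verts
  by (metis Pow_iff finite_Pow_iff finite_subset subsetI)

definition mirror :: "hvert \<Rightarrow> hvert" where
  "mirror = (\<lambda>(h, j). (- h, j))"

lemma mirror_Pair [simp]: "mirror (h, j) = (- h, j)"
  by (simp add: mirror_def)

lemma mirror_mirror [simp]: "mirror (mirror v) = v"
  by (cases v) simp

lemma inj_mirror: "inj mirror"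
  by (metis injI mirror_mirror)

lemma mirror_in_H_verts [simp]: "mirror v \<in> H_verts l \<longleftrightarrow> v \<in> H_verts l"
  by (cases v) auto

lemma image_mirror_mirror [simp]: "(`) mirror ` (`) mirror ` A = A"
  by (simp add: image_image)

lemma mirror_H_edge:
  assumes "e \<in> H_edges l"
  shows "mirror ` e \<in> H_edges l"
  using assms unfolding H_edges_iff[of e]
proof (elim disjE exE conjE)
  fix h j c assume "e = {(h, j), (h - 1, c)}" "upper_child l h j c"
  then show ?thesis using lower_edge_in_H_edges[of l "- h" j c] by (simp add: lower_child_iff)
next
  fix h j c assume "e = {(h, j), (h + 1, c)}" "lower_child l h j c"
  then show ?thesis using upper_edge_in_H_edges[of l "- h" j c] by (simp add: lower_child_iff)
next
  assume "e = {(int l, 1), (- int l, 1)}"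
  then show ?thesis using root_edge_in_H_edges by (simp add: insert_commute)
next
  fix j assume "e = {(0, 2 * j - 1), (0, 2 * j)}" "1 \<le> j" "j \<le> 2 ^ (l - 1)"
  then show ?thesis using matching_edge_in_H_edges by simp
qed

lemma image_mirror_H_edges [simp]: "(`) mirror ` H_edges l = H_edges l"
proof
  show "(`) mirror ` H_edges l \<subseteq> H_edges l" using mirror_H_edge by blast
  show "H_edges l \<subseteq> (`) mirror ` H_edges l"
  proof
    fix e assume "e \<in> H_edges l"
    then have "mirror ` (mirror ` e) \<in> (`) mirror ` H_edges l" by (intro imageI mirror_H_edge)
    then show "e \<in> (`) mirror ` H_edges l" by (simp add: image_image)
  qed
qed

section \<open>Order and regularity\<close>

lemma sum_level_sizes:
  "n \<le> m \<Longrightarrow> (\<Sum>h\<in>{- int n..int n}. (2::nat) ^ nat (int m - \<bar>h\<bar>)) + 2 ^ (m - n + 1) = 3 * 2 ^ m"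
proof (induction n)
  case (Suc n)
  have levels: "{- int (Suc n)..int (Suc n)} = insert (- int n - 1) (insert (int n + 1) {- int n..int n})"
    by auto
  have "nat (int m - \<bar>- int n - 1\<bar>) = m - Suc n" "nat (int m - \<bar>int n + 1\<bar>) = m - Suc n"
    using Suc.prems by auto
  then have "(\<Sum>h\<in>{- int (Suc n)..int (Suc n)}. (2::nat) ^ nat (int m - \<bar>h\<bar>)) =
      2 ^ (m - Suc n) + 2 ^ (m - Suc n) + (\<Sum>h\<in>{- int n..int n}. (2::nat) ^ nat (int m - \<bar>h\<bar>))"
    unfolding levels by simp
  moreover have "m - n + 1 = Suc (Suc (m - Suc n))" using Suc.prems by simp
  then have "(2::nat) ^ (m - n + 1) = 2 ^ (m - Suc n) + 2 ^ (m - Suc n) + 2 ^ (m - Suc n + 1)"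
    by simp
  ultimately show ?case using Suc.IH Suc.prems by simp
qed simp

lemma card_H_verts: "card (H_verts l) = 2 ^ (l + 1) + 2 ^ l - 2"
proof -
  have "card (H_verts l) = (\<Sum>h\<in>{- int l..int l}. (2::nat) ^ nat (int l - \<bar>h\<bar>))"
    unfolding H_verts_Sigma by (subst card_SigmaI) auto
  with sum_level_sizes[of l l] show ?thesis by simp
qed

lemma upper_incident_edges:
  assumes "1 \<le> h" "(h, j) \<in> H_verts l"
  shows "{e \<in> H_edges l. (h, j) \<in> e} =
    {{(h, j), (h - 1, 2 * j - 1)}, {(h, j), (h - 1, 2 * j)},
     {(h, j), if h = int l then (- int l, 1) else (h + 1, (j + 1) div 2)}}"
    (is "_ = {_, _, {_, ?up}}")
proof (intro equalityI subsetI)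
  fix e assume "e \<in> {e \<in> H_edges l. (h, j) \<in> e}"
  then have e: "e \<in> H_edges l" "(h, j) \<in> e" by auto
  from e(1) show "e \<in> {{(h, j), (h - 1, 2 * j - 1)}, {(h, j), (h - 1, 2 * j)}, {(h, j), ?up}}"
    unfolding H_edges_iff
  proof (elim disjE exE conjE)
    fix h' j' c assume e': "e = {(h', j'), (h' - 1, c)}" and child: "upper_child l h' j' c"
    with e(2) consider "(h, j) = (h', j')" | "(h, j) = (h' - 1, c)" by blast
    then show ?thesis
    proof cases
      case 1
      with e' child show ?thesis unfolding upper_child_def by auto
    next
      case 2
      with child upper_child_parent_eq[OF child] have "h \<noteq> int l" "j' = (j + 1) div 2"
        unfolding upper_child_def by auto
      with e' 2 show ?thesis by (auto simp: insert_commute)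
    qed
  next
    fix h' j' c assume "e = {(h', j'), (h' + 1, c)}" "lower_child l h' j' c"
    with e(2) assms(1) show ?thesis unfolding lower_child_def by auto
  next
    assume "e = {(int l, 1), (- int l, 1)}"
    with e(2) assms(1) show ?thesis by auto
  next
    fix j' assume "e = {(0, 2 * j' - 1), (0, 2 * j')}"
    with e(2) assms(1) show ?thesis by auto
  qed
next
  have "upper_child l h j (2 * j - 1)" "upper_child l h j (2 * j)"
    using assms unfolding upper_child_def by auto
  then have children: "{(h, j), (h - 1, 2 * j - 1)} \<in> H_edges l" "{(h, j), (h - 1, 2 * j)} \<in> H_edges l"
    by (auto intro: upper_edge_in_H_edges)
  have "{(h, j), ?up} \<in> H_edges l"
  proof (cases "h = int l")
    case True
    with assms have "j = 1" by simp
    with True root_edge_in_H_edges show ?thesis by simp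
  next
    case False
    with assms have "upper_child l (h + 1) ((j + 1) div 2) j" by (intro upper_child_of_parent) auto
    from upper_edge_in_H_edges[OF this] False show ?thesis by (simp add: insert_commute)
  qed
  with children show "e \<in> {e \<in> H_edges l. (h, j) \<in> e}"
    if "e \<in> {{(h, j), (h - 1, 2 * j - 1)}, {(h, j), (h - 1, 2 * j)}, {(h, j), ?up}}" for e
    using that by auto
qed

lemma degree_upper_vertex:
  assumes "1 \<le> h" "(h, j) \<in> H_verts l"
  shows "degree (H_edges l) (h, j) = 3"
  unfolding degree_def upper_incident_edges[OF assms]
  by (rule card_three_edges) (use assms in auto)

lemma level0_incident_edges:
  assumes "l \<ge> 1" "(0, j) \<in> H_verts l"
  shows "{e \<in> H_edges l. (0, j) \<in> e} =
    {{(0, j), (1, (j + 1) div 2)}, {(0, j), (- 1, (j + 1) div 2)},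
     {(0, j), (0, if odd j then j + 1 else j - 1)}}"
    (is "_ = {{_, ?up}, {_, ?down}, {_, ?mate}}")
proof (intro equalityI subsetI)
  fix e assume "e \<in> {e \<in> H_edges l. (0, j) \<in> e}"
  then have e: "e \<in> H_edges l" "(0, j) \<in> e" by auto
  from e(1) show "e \<in> {{(0, j), ?up}, {(0, j), ?down}, {(0, j), ?mate}}"
    unfolding H_edges_iff
  proof (elim disjE exE conjE)
    fix h' j' c assume e': "e = {(h', j'), (h' - 1, c)}" and child: "upper_child l h' j' c"
    with e(2) have "h' = 1" "c = j" unfolding upper_child_def by auto
    with e' upper_child_parent_eq[OF child] show ?thesis by (auto simp: insert_commute)
  next
    fix h' j' c assume e': "e = {(h', j'), (h' + 1, c)}" and child: "lower_child l h' j' c"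
    with e(2) have "h' = - 1" "c = j" unfolding lower_child_def by auto
    with e' upper_child_parent_eq child show ?thesis by (auto simp: insert_commute lower_child_iff)
  next
    assume "e = {(int l, 1), (- int l, 1)}"
    with e(2) assms(1) show ?thesis by auto
  next
    fix j' assume e': "e = {(0, 2 * j' - 1), (0, 2 * j')}" "1 \<le> j'"
    with e(2) consider "j = 2 * j' - 1" | "j = 2 * j'" by auto
    then show ?thesis
    proof cases
      case 1
      with e' have "odd j" "j + 1 = 2 * j'" by presburger+
      with e' 1 show ?thesis by auto
    next
      case 2
      with e' have "\<not> odd j" "j - 1 = 2 * j' - 1" by presburger+
      with e' 2 show ?thesis by (auto simp: insert_commute)
    qed
  qed
next
  have "upper_child l 1 ((j + 1) div 2) j"
    using assms upper_child_of_parent[of 0 j l] by simp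
  then have up: "{(0, j), ?up} \<in> H_edges l"
    using upper_edge_in_H_edges by (fastforce simp: insert_commute)
  then have "mirror ` {(0, j), ?up} \<in> H_edges l" by (rule mirror_H_edge)
  then have down: "{(0, j), ?down} \<in> H_edges l" by simp
  let ?p = "(j + 1) div 2"
  have "nat (int l - 1) = l - 1" using assms(1) by simp
  then have "1 \<le> ?p" "?p \<le> 2 ^ (l - 1)"
    using \<open>upper_child l 1 ?p j\<close> unfolding upper_child_def by auto
  moreover have "{(0, j), ?mate} = {(0, 2 * ?p - 1), (0, 2 * ?p)}"
  proof (cases "odd j")
    case True
    then have "2 * ?p - 1 = j" "2 * ?p = j + 1" by presburger+
    with True show ?thesis by simp
  next
    case False
    then have "2 * ?p - 1 = j - 1" "2 * ?p = j" by presburger+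
    with False show ?thesis by (simp add: insert_commute)
  qed
  ultimately have "{(0, j), ?mate} \<in> H_edges l" using matching_edge_in_H_edges by simp
  with up down show "e \<in> {e \<in> H_edges l. (0, j) \<in> e}"
    if "e \<in> {{(0, j), ?up}, {(0, j), ?down}, {(0, j), ?mate}}" for e
    using that by auto
qed

lemma degree_level0_vertex:
  assumes "l \<ge> 1" "(0, j) \<in> H_verts l"
  shows "degree (H_edges l) (0, j) = 3"
  unfolding degree_def level0_incident_edges[OF assms]
  by (rule card_three_edges) auto

lemma regular_H:
  assumes "l \<ge> 1"
  shows "regular 3 (H_verts l) (H_edges l)"
  unfolding regular_def
proof
  fix v assume v: "v \<in> H_verts l"
  obtain h j where hj: "v = (h, j)" by force
  consider "1 \<le> h" | "h = 0" | "h \<le> - 1" by linarith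
  then show "degree (H_edges l) v = 3"
  proof cases
    case 3
    have "degree (H_edges l) (h, j) = degree ((`) mirror ` H_edges l) (mirror (- h, j))"
      by simp
    also have "\<dots> = degree (H_edges l) (- h, j)"
      by (rule degree_image[OF inj_mirror])
    also have "\<dots> = 3"
      using 3 v hj mirror_in_H_verts[of "(h, j)" l] by (intro degree_upper_vertex) auto
    finally show ?thesis using hj by simp
  qed (use v hj assms degree_upper_vertex degree_level0_vertex in auto)
qed

section \<open>Edge connectivity\<close>

lemma upper_ascent:
  assumes G: "\<And>h j c. upper_child l h j c \<Longrightarrow> m < h \<Longrightarrow> {(h, j), (h - 1, c)} \<in> G"
    and "0 \<le> m" "m \<le> k" "(k, j) \<in> H_verts l"
  shows "((k, j), (int l, 1)) \<in> (adj_rel G)\<^sup>*"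
proof -
  have "((k, j), (int l, 1)) \<in> (adj_rel G)\<^sup>*"
    if "nat (int l - k) = n" "m \<le> k" "(k, j) \<in> H_verts l" for n k j
    using that
  proof (induction n arbitrary: k j)
    case 0
    then have "k = int l" "j = 1" by auto
    then show ?case by simp
  next
    case (Suc n)
    let ?p = "(k + 1, (j + 1) div 2)"
    have child: "upper_child l (k + 1) ((j + 1) div 2) j"
      using Suc.prems \<open>0 \<le> m\<close> by (intro upper_child_of_parent) auto
    with G Suc.prems(2) have "{?p, (k, j)} \<in> G" by fastforce
    then have "((k, j), ?p) \<in> (adj_rel G)\<^sup>*" by (simp add: edge_adj_rtrancl insert_commute)
    moreover have "(?p, (int l, 1)) \<in> (adj_rel G)\<^sup>*"
      using Suc upper_child_verts(1)[OF child] by simp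
    ultimately show ?case by (rule rtrancl_trans)
  qed
  with assms show ?thesis by blast
qed

lemma upper_descent:
  assumes G: "\<And>h j c. upper_child l h j c \<Longrightarrow> h \<le> m \<Longrightarrow> {(h, j), (h - 1, c)} \<in> G"
    and "0 \<le> k" "k \<le> m" "(k, j) \<in> H_verts l"
  shows "\<exists>j0. (0, j0) \<in> H_verts l \<and> ((k, j), (0, j0)) \<in> (adj_rel G)\<^sup>*"
proof -
  have "\<exists>j0. (0, j0) \<in> H_verts l \<and> ((int n, j), (0, j0)) \<in> (adj_rel G)\<^sup>*"
    if "int n \<le> m" "(int n, j) \<in> H_verts l" for n j
    using that
  proof (induction n arbitrary: j)
    case 0
    then show ?case by auto
  next
    case (Suc n)
    have child: "upper_child l (int n + 1) j (2 * j - 1)"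
      using Suc.prems unfolding upper_child_def by (auto simp: add.commute)
    moreover have "int n + 1 \<le> m" using Suc.prems(1) by simp
    ultimately have "{(int n + 1, j), (int n + 1 - 1, 2 * j - 1)} \<in> G" by (rule G)
    then have "{(int (Suc n), j), (int n, 2 * j - 1)} \<in> G" by (simp add: add.commute)
    then have "((int (Suc n), j), (int n, 2 * j - 1)) \<in> (adj_rel G)\<^sup>*" by (rule edge_adj_rtrancl)
    moreover obtain j0 where "(0, j0) \<in> H_verts l" "((int n, 2 * j - 1), (0, j0)) \<in> (adj_rel G)\<^sup>*"
      using Suc.IH[of "2 * j - 1"] Suc.prems upper_child_verts(2)[OF child] by auto
    ultimately show ?case by (meson rtrancl_trans)
  qed
  from this[of "nat k"] assms show ?thesis by simp
qed

lemma lower_ascent: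
  assumes G: "\<And>h j c. lower_child l h j c \<Longrightarrow> {(h, j), (h + 1, c)} \<in> G"
    and "k \<le> 0" "(k, j) \<in> H_verts l"
  shows "((k, j), (- int l, 1)) \<in> (adj_rel G)\<^sup>*"
proof -
  have mirrored: "{(h, j), (h - 1, c)} \<in> (`) mirror ` G" if "upper_child l h j c" for h j c
  proof -
    from that have "{(- h, j), (- h + 1, c)} \<in> G"
      using G[of "- h" j c] by (simp add: lower_child_iff)
    moreover have "mirror ` {(- h, j), (- h + 1, c)} = {(h, j), (h - 1, c)}" by simp
    ultimately show ?thesis by (metis imageI)
  qed
  have "((- k, j), (int l, 1)) \<in> (adj_rel ((`) mirror ` G))\<^sup>*"
    by (rule upper_ascent[where m = 0]) (use mirrored assms(2,3) in auto)
  from adj_rtrancl_image[OF inj_mirror this] show ?thesis by simp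
qed

lemma H_vertex_reaches_top_root:
  assumes "v \<in> H_verts l"
  shows "(v, (int l, 1)) \<in> (adj_rel (H_edges l))\<^sup>*"
proof -
  obtain k j where v: "v = (k, j)" by force
  show ?thesis
    unfolding v
  proof (cases "0 \<le> k")
    case True
    show "((k, j), (int l, 1)) \<in> (adj_rel (H_edges l))\<^sup>*"
      by (rule upper_ascent[where m = 0]) (use True assms v upper_edge_in_H_edges in auto)
  next
    case False
    have "((k, j), (- int l, 1)) \<in> (adj_rel (H_edges l))\<^sup>*"
      by (rule lower_ascent) (use False assms v lower_edge_in_H_edges in auto)
    moreover have "((- int l, 1), (int l, 1)) \<in> (adj_rel (H_edges l))\<^sup>*"
      using root_edge_in_H_edges by (simp add: edge_adj_rtrancl insert_commute)
    ultimately show "((k, j), (int l, 1)) \<in> (adj_rel (H_edges l))\<^sup>*" by (rule rtrancl_trans)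
  qed
qed

lemma connected_H: "connected_graph (H_verts l) (H_edges l)"
  unfolding connected_graph_def
proof (intro conjI ballI)
  have "(int l, 1) \<in> H_verts l" by simp
  then show "H_verts l \<noteq> {}" by blast
  fix u v assume "u \<in> H_verts l" "v \<in> H_verts l"
  then show "(u, v) \<in> (adj_rel (H_edges l))\<^sup>*"
    using H_vertex_reaches_top_root adj_rtrancl_sym by (meson rtrancl_trans)
qed

lemma upper_edge_not_bridge:
  assumes "l \<ge> 1" and child: "upper_child l h j c"
  shows "((h, j), (h - 1, c)) \<in> (adj_rel (H_edges l - {{(h, j), (h - 1, c)}}))\<^sup>*"
proof -
  let ?G = "H_edges l - {{(h, j), (h - 1, c)}}"
  have h: "1 \<le> h" "h \<le> int l" using child unfolding upper_child_def by auto
  have above: "{(h', j'), (h' - 1, c')} \<in> ?G" if "upper_child l h' j' c'" "h < h'" for h' j' c'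
    using that upper_edge_in_H_edges by (auto simp: doubleton_eq_iff)
  have below: "{(h', j'), (h' - 1, c')} \<in> ?G" if "upper_child l h' j' c'" "h' \<le> h - 1" for h' j' c'
    using that upper_edge_in_H_edges by (auto simp: doubleton_eq_iff)
  have lower: "{(h', j'), (h' + 1, c')} \<in> ?G" if "lower_child l h' j' c'" for h' j' c'
    using that h lower_edge_in_H_edges unfolding lower_child_def by (auto simp: doubleton_eq_iff)
  have "((h, j), (int l, 1)) \<in> (adj_rel ?G)\<^sup>*"
    by (rule upper_ascent[where m = h]) (use above h upper_child_verts(1)[OF child] in auto)
  moreover have "((int l, 1), (- int l, 1)) \<in> (adj_rel ?G)\<^sup>*"
    using h root_edge_in_H_edges by (intro edge_adj_rtrancl) (auto simp: doubleton_eq_iff)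
  moreover have "\<exists>j0. (0, j0) \<in> H_verts l \<and> ((h - 1, c), (0, j0)) \<in> (adj_rel ?G)\<^sup>*"
    by (rule upper_descent[where m = "h - 1"]) (use below h upper_child_verts(2)[OF child] in auto)
  then obtain j0 where j0: "(0, j0) \<in> H_verts l" "((h - 1, c), (0, j0)) \<in> (adj_rel ?G)\<^sup>*"
    by blast
  moreover have "((0, j0), (- int l, 1)) \<in> (adj_rel ?G)\<^sup>*"
    by (rule lower_ascent) (use j0(1) lower in auto)
  ultimately show ?thesis by (meson adj_rtrancl_sym rtrancl_trans)
qed

lemma H_edge_not_bridge:
  assumes "l \<ge> 1" "e \<in> H_edges l"
  shows "\<exists>a b. e = {a, b} \<and> (a, b) \<in> (adj_rel (H_edges l - {e}))\<^sup>*"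
  using assms(2) unfolding H_edges_iff
proof (elim disjE exE conjE)
  fix h j c assume "e = {(h, j), (h - 1, c)}" "upper_child l h j c"
  then show ?thesis using upper_edge_not_bridge[OF assms(1)] by blast
next
  fix h j c assume e: "e = {(h, j), (h + 1, c)}" and "lower_child l h j c"
  then have "((- h, j), (- h - 1, c)) \<in> (adj_rel (H_edges l - {{(- h, j), (- h - 1, c)}}))\<^sup>*"
    using upper_edge_not_bridge[OF assms(1), of "- h" j c] by (simp add: lower_child_iff)
  from adj_rtrancl_image[OF inj_mirror this]
  have "((h, j), (h + 1, c)) \<in> (adj_rel ((`) mirror ` H_edges l - {e}))\<^sup>*"
    unfolding image_set_diff[OF inj_image_image[OF inj_mirror]] e by (simp add: add.commute)
  then show ?thesis using e by auto
next
  assume e: "e = {(int l, 1), (- int l, 1)}"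
  let ?G = "H_edges l - {e}"
  have upper: "{(h, j), (h - 1, c)} \<in> ?G" if "upper_child l h j c" for h j c
    using that upper_edge_in_H_edges unfolding e upper_child_def by (auto simp: doubleton_eq_iff)
  have lower: "{(h, j), (h + 1, c)} \<in> ?G" if "lower_child l h j c" for h j c
    using that assms(1) lower_edge_in_H_edges unfolding e lower_child_def
    by (auto simp: doubleton_eq_iff)
  have "\<exists>j0. (0, j0) \<in> H_verts l \<and> ((int l, 1), (0, j0)) \<in> (adj_rel ?G)\<^sup>*"
    by (rule upper_descent[where m = "int l"]) (use upper in auto)
  then obtain j0 where j0: "(0, j0) \<in> H_verts l" "((int l, 1), (0, j0)) \<in> (adj_rel ?G)\<^sup>*"
    by blast
  moreover have "((0, j0), (- int l, 1)) \<in> (adj_rel ?G)\<^sup>*"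
    by (rule lower_ascent) (use j0(1) lower in auto)
  ultimately have "((int l, 1), (- int l, 1)) \<in> (adj_rel ?G)\<^sup>*" by (meson rtrancl_trans)
  then show ?thesis using e by blast
next
  fix j assume e: "e = {(0, 2 * j - 1), (0, 2 * j)}" and j: "1 \<le> j" "j \<le> 2 ^ (l - 1)"
  let ?G = "H_edges l - {e}"
  have "(2::nat) ^ l = 2 * 2 ^ (l - 1)" using assms(1) by (cases l) auto
  then have verts: "(0, 2 * j - 1) \<in> H_verts l" "(0, 2 * j) \<in> H_verts l" using j by auto
  have upper: "{(h, j'), (h - 1, c)} \<in> ?G" if "upper_child l h j' c" "0 < h" for h j' c
    using that upper_edge_in_H_edges unfolding e by (auto simp: doubleton_eq_iff)
  have "((0, 2 * j - 1), (int l, 1)) \<in> (adj_rel ?G)\<^sup>*"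
    by (rule upper_ascent[where m = 0]) (use upper verts in auto)
  moreover have "((0, 2 * j), (int l, 1)) \<in> (adj_rel ?G)\<^sup>*"
    by (rule upper_ascent[where m = 0]) (use upper verts in auto)
  ultimately have "((0, 2 * j - 1), (0, 2 * j)) \<in> (adj_rel ?G)\<^sup>*"
    by (meson adj_rtrancl_sym rtrancl_trans)
  then show ?thesis using e by blast
qed

section \<open>Planarity\<close>

text \<open>Every vertex other than a root lies midway between its two children; the roots lie
  on the line \<open>Re = -1\<close>, to the left of all other vertices.\<close>
definition x_coord :: "nat \<Rightarrow> int \<Rightarrow> nat \<Rightarrow> real" where
  "x_coord l h j = (if nat \<bar>h\<bar> = l then -1 else (2 * real j - 1) * 2 ^ nat \<bar>h\<bar>)"

definition vertex_pos :: "nat \<Rightarrow> hvert \<Rightarrow> complex" where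
  "vertex_pos l v = Complex (x_coord l (fst v) (snd v)) (of_int (fst v))"

lemma vertex_pos_Re [simp]: "Re (vertex_pos l (h, j)) = x_coord l h j"
  and vertex_pos_Im [simp]: "Im (vertex_pos l (h, j)) = of_int h"
  by (simp_all add: vertex_pos_def)

lemma x_coord_level0: "l \<ge> 1 \<Longrightarrow> x_coord l 0 j = 2 * real j - 1"
  by (simp add: x_coord_def)

lemma x_coord_ge_one:
  assumes "j \<ge> 1" "nat \<bar>h\<bar> \<noteq> l"
  shows "x_coord l h j \<ge> 1"
proof -
  have "1 * 1 \<le> (2 * real j - 1) * 2 ^ nat \<bar>h\<bar>"
    using assms by (intro mult_mono) auto
  with assms show ?thesis by (simp add: x_coord_def)
qed

lemma x_coord_ge_minus_one: "j \<ge> 1 \<Longrightarrow> x_coord l h j \<ge> -1"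
  using x_coord_ge_one[of j h l] by (cases "nat \<bar>h\<bar> = l") (auto simp: x_coord_def)

lemma x_coord_mono: "j \<le> j' \<Longrightarrow> x_coord l h j \<le> x_coord l h j'"
  by (auto simp: x_coord_def intro!: mult_right_mono)

lemma x_coord_strict_mono: "j < j' \<Longrightarrow> nat \<bar>h\<bar> \<noteq> l \<Longrightarrow> x_coord l h j < x_coord l h j'"
  by (auto simp: x_coord_def intro!: mult_strict_right_mono)

lemma x_coord_eq_minus_one:
  assumes "(h, j) \<in> H_verts l" "x_coord l h j = -1"
  shows "(h, j) = (int l, 1) \<or> (h, j) = (- int l, 1)"
proof -
  have "nat \<bar>h\<bar> = l" using x_coord_ge_one[of j h l] assms by auto
  with assms show ?thesis by auto
qed

lemma inj_on_vertex_pos: "inj_on (vertex_pos l) (H_verts l)"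
proof (rule inj_onI)
  fix v w assume v: "v \<in> H_verts l" and w: "w \<in> H_verts l" and eq: "vertex_pos l v = vertex_pos l w"
  obtain h j h' j' where vw: "v = (h, j)" "w = (h', j')" by force
  have "h = h'" using arg_cong[OF eq, of Im] vw by simp
  moreover have "j = j'"
  proof (cases "nat \<bar>h\<bar> = l")
    case True
    with v w vw \<open>h = h'\<close> show ?thesis by auto
  next
    case False
    have "x_coord l h j = x_coord l h j'" using arg_cong[OF eq, of Re] vw \<open>h = h'\<close> by simp
    with x_coord_strict_mono[OF _ False, of j j'] x_coord_strict_mono[OF _ False, of j' j]
    show ?thesis by (metis linorder_neqE_nat order_less_irrefl)
  qed
  ultimately show "v = w" using vw by simp
qed

definition strip_point :: "nat \<Rightarrow> complex \<Rightarrow> int \<Rightarrow> bool" where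
  "strip_point l z a \<longleftrightarrow> of_int a \<le> Im z \<and> Im z \<le> of_int a + 1 \<and>
     ((Im z = of_int a \<or> Im z = of_int a + 1 \<or> Re z = -1) \<longrightarrow> z \<in> vertex_pos l ` H_verts l)"

lemma strip_point_two_strips:
  assumes "strip_point l z a" "strip_point l z b" "a \<noteq> b"
  shows "z \<in> vertex_pos l ` H_verts l"
proof (cases "a < b")
  case True
  then have "of_int a + 1 \<le> (of_int b :: real)" by linarith
  with assms show ?thesis unfolding strip_point_def by auto
next
  case False
  with assms(3) have "of_int b + 1 \<le> (of_int a :: real)" by linarith
  with assms show ?thesis unfolding strip_point_def by auto
qed

lemma strip_point_int_Im:
  assumes "strip_point l z a" "Im z = of_int m"
  shows "z \<in> vertex_pos l ` H_verts l"
proof -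
  from assms have "of_int a \<le> (of_int m :: real)" "(of_int m :: real) \<le> of_int a + 1"
    unfolding strip_point_def by auto
  then have "m = a \<or> m = a + 1" by linarith
  with assms show ?thesis unfolding strip_point_def by auto
qed

lemma strip_point_Re_minus_one:
  "strip_point l z a \<Longrightarrow> Re z = -1 \<Longrightarrow> z \<in> vertex_pos l ` H_verts l"
  unfolding strip_point_def by auto

lemma closed_segment_strip_point:
  assumes z: "z \<in> closed_segment (vertex_pos l L) (vertex_pos l U)"
    and "L \<in> H_verts l" "U \<in> H_verts l"
    and "Im (vertex_pos l L) = of_int k" "Im (vertex_pos l U) = Im (vertex_pos l L) + 1"
    and "Re (vertex_pos l L) \<ge> -1" "Re (vertex_pos l U) \<ge> -1"
    and "Re (vertex_pos l L) \<ge> 1 \<or> Re (vertex_pos l U) \<ge> 1"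
  shows "strip_point l z k"
proof -
  have "z = vertex_pos l L \<or> z = vertex_pos l U" if "Re z = -1"
  proof (cases "Re (vertex_pos l U) \<ge> 1")
    case True
    with assms that show ?thesis using closed_segment_Re_minus_one[OF z] by simp
  next
    case False
    with assms that show ?thesis
      using closed_segment_Re_minus_one[of z "vertex_pos l U" "vertex_pos l L"]
      by (simp add: closed_segment_commute)
  qed
  with closed_segment_unit_rise[OF z assms(5)] assms show ?thesis
    unfolding strip_point_def by auto
qed

lemma upper_segment_strip_point:
  assumes "upper_child l h j c" "z \<in> closed_segment (vertex_pos l (h, j)) (vertex_pos l (h - 1, c))"
  shows "strip_point l z (h - 1)"
proof (rule closed_segment_strip_point[where L = "(h - 1, c)" and U = "(h, j)"])
  have h: "1 \<le> h" "h \<le> int l" "1 \<le> j" "1 \<le> c"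
    using assms(1) unfolding upper_child_def by auto
  then have "nat \<bar>h - 1\<bar> \<noteq> l" by auto
  with h show "Re (vertex_pos l (h - 1, c)) \<ge> 1 \<or> Re (vertex_pos l (h, j)) \<ge> 1"
    using x_coord_ge_one by simp
  show "Re (vertex_pos l (h - 1, c)) \<ge> -1" "Re (vertex_pos l (h, j)) \<ge> -1"
    using h x_coord_ge_minus_one by simp_all
qed (use assms upper_child_verts in \<open>simp_all add: closed_segment_commute\<close>)

lemma lower_segment_strip_point:
  assumes "lower_child l h j c" "z \<in> closed_segment (vertex_pos l (h, j)) (vertex_pos l (h + 1, c))"
  shows "strip_point l z h"
proof (rule closed_segment_strip_point[where L = "(h, j)" and U = "(h + 1, c)"])
  have h: "- int l \<le> h" "h \<le> -1" "1 \<le> j" "1 \<le> c"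
    using assms(1) unfolding lower_child_def by auto
  then have "nat \<bar>h + 1\<bar> \<noteq> l" by auto
  with h show "Re (vertex_pos l (h, j)) \<ge> 1 \<or> Re (vertex_pos l (h + 1, c)) \<ge> 1"
    using x_coord_ge_one by simp
  show "Re (vertex_pos l (h, j)) \<ge> -1" "Re (vertex_pos l (h + 1, c)) \<ge> -1"
    using h x_coord_ge_minus_one by simp_all
qed (use assms lower_child_verts in simp_all)

lemma matching_segment_bounds:
  assumes "j \<ge> 1" "l \<ge> 1" "z \<in> closed_segment (vertex_pos l (0, 2 * j - 1)) (vertex_pos l (0, 2 * j))"
  shows "Im z = 0 \<and> 4 * real j - 3 \<le> Re z \<and> Re z \<le> 4 * real j - 1"
proof -
  have "Re (vertex_pos l (0, 2 * j - 1)) = 4 * real j - 3" "Re (vertex_pos l (0, 2 * j)) = 4 * real j - 1"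
    using assms(1) x_coord_level0[OF assms(2)] by (simp_all add: of_nat_diff)
  with closed_segment_Im_const[OF assms(3)] closed_segment_Re_between[OF assms(3)] show ?thesis
    by simp
qed

lemma root_segment_Re:
  "z \<in> closed_segment (vertex_pos l (int l, 1)) (vertex_pos l (- int l, 1)) \<Longrightarrow> Re z = -1"
  using closed_segment_Re_const by (simp add: x_coord_def)

lemma upper_segment_vertex:
  assumes "w \<in> H_verts l" "vertex_pos l w \<in> closed_segment (vertex_pos l (h, j)) (vertex_pos l (h - 1, c))"
  shows "vertex_pos l w \<in> {vertex_pos l (h, j), vertex_pos l (h - 1, c)}"
proof -
  obtain h' j' where w: "w = (h', j')" by force
  have "vertex_pos l w \<in> closed_segment (vertex_pos l (h - 1, c)) (vertex_pos l (h, j))"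
    using assms(2) by (simp add: closed_segment_commute)
  from closed_segment_unit_rise_int_Im[OF this, of "h - 1" h'] w show ?thesis by auto
qed

lemma lower_segment_vertex:
  assumes "w \<in> H_verts l" "vertex_pos l w \<in> closed_segment (vertex_pos l (h, j)) (vertex_pos l (h + 1, c))"
  shows "vertex_pos l w \<in> {vertex_pos l (h, j), vertex_pos l (h + 1, c)}"
proof -
  obtain h' j' where w: "w = (h', j')" by force
  from closed_segment_unit_rise_int_Im[OF assms(2), of h h'] w show ?thesis by auto
qed

lemma matching_segment_vertex:
  assumes "j \<ge> 1" "l \<ge> 1" "w \<in> H_verts l"
    and "vertex_pos l w \<in> closed_segment (vertex_pos l (0, 2 * j - 1)) (vertex_pos l (0, 2 * j))"
  shows "vertex_pos l w \<in> {vertex_pos l (0, 2 * j - 1), vertex_pos l (0, 2 * j)}"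
proof -
  obtain h' j' where w: "w = (h', j')" by force
  note bounds = matching_segment_bounds[OF assms(1,2,4)]
  then have "h' = 0" using w by simp
  with bounds w x_coord_level0[OF assms(2)]
  have "4 * real j - 3 \<le> 2 * real j' - 1" "2 * real j' - 1 \<le> 4 * real j - 1" by auto
  then have "j' = 2 * j - 1 \<or> j' = 2 * j" by linarith
  with w \<open>h' = 0\<close> show ?thesis by auto
qed

lemma root_segment_vertex:
  assumes "w \<in> H_verts l"
    and "vertex_pos l w \<in> closed_segment (vertex_pos l (int l, 1)) (vertex_pos l (- int l, 1))"
  shows "vertex_pos l w \<in> {vertex_pos l (int l, 1), vertex_pos l (- int l, 1)}"
proof -
  obtain h' j' where w: "w = (h', j')" by force
  with root_segment_Re[OF assms(2)] have "x_coord l h' j' = -1" by simp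
  with x_coord_eq_minus_one[of h' j' l] assms(1) w show ?thesis by auto
qed

text \<open>Children are drawn in the same left-to-right order as their parents, so two
  tree edges in the same strip cannot cross.\<close>
lemma upper_segments_inter:
  assumes "upper_child l h j c" "upper_child l h j' c'" "c < c'"
    and "z \<in> closed_segment (vertex_pos l (h, j)) (vertex_pos l (h - 1, c))"
    and "z \<in> closed_segment (vertex_pos l (h, j')) (vertex_pos l (h - 1, c'))"
  shows "z \<in> vertex_pos l ` H_verts l"
proof -
  have h: "1 \<le> h" "h \<le> int l" "j \<le> j'"
    using assms(1-3) unfolding upper_child_def by auto
  then have level: "nat \<bar>h - 1\<bar> \<noteq> l" by auto
  from h assms(4,5) have "z = vertex_pos l (h - 1, c) \<or> z = vertex_pos l (h, j)"
    using x_coord_strict_mono[OF assms(3) level] x_coord_mono[OF \<open>j \<le> j'\<close>]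
    by (intro closed_segments_unit_rise_inter[where a' = "vertex_pos l (h - 1, c')"
          and b' = "vertex_pos l (h, j')"]) (auto simp: closed_segment_commute)
  then show ?thesis using upper_child_verts[OF assms(1)] by auto
qed

lemma lower_segments_inter:
  assumes "lower_child l h j c" "lower_child l h j' c'" "c < c'"
    and "z \<in> closed_segment (vertex_pos l (h, j)) (vertex_pos l (h + 1, c))"
    and "z \<in> closed_segment (vertex_pos l (h, j')) (vertex_pos l (h + 1, c'))"
  shows "z \<in> vertex_pos l ` H_verts l"
proof -
  have h: "- int l \<le> h" "h \<le> -1" "j \<le> j'"
    using assms(1-3) unfolding lower_child_def by auto
  then have level: "nat \<bar>h + 1\<bar> \<noteq> l" by auto
  from h assms(4,5) have "z = vertex_pos l (h, j) \<or> z = vertex_pos l (h + 1, c)"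
    using x_coord_strict_mono[OF assms(3) level] x_coord_mono[OF \<open>j \<le> j'\<close>]
    by (intro closed_segments_unit_rise_inter[where a' = "vertex_pos l (h, j')"
          and b' = "vertex_pos l (h + 1, c')"]) auto
  then show ?thesis using lower_child_verts[OF assms(1)] by auto
qed

definition strip_edge :: "nat \<Rightarrow> hvert set \<Rightarrow> int \<Rightarrow> bool" where
  "strip_edge l e a \<longleftrightarrow> (\<exists>h j c. upper_child l h j c \<and> e = {(h, j), (h - 1, c)} \<and> a = h - 1) \<or>
                         (\<exists>h j c. lower_child l h j c \<and> e = {(h, j), (h + 1, c)} \<and> a = h)"

lemma H_segment_cases:
  assumes "l \<ge> 1" "e \<in> H_edges l" "z \<in> convex hull (vertex_pos l ` e)"
  shows "(\<exists>a. strip_edge l e a \<and> strip_point l z a) \<or>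
    (\<exists>j. 1 \<le> j \<and> e = {(0, 2 * j - 1), (0, 2 * j)} \<and> Im z = 0 \<and>
       4 * real j - 3 \<le> Re z \<and> Re z \<le> 4 * real j - 1) \<or>
    (e = {(int l, 1), (- int l, 1)} \<and> Re z = -1)"
  using assms(2) unfolding H_edges_iff
proof (elim disjE exE conjE)
  fix h j c assume e: "e = {(h, j), (h - 1, c)}" and child: "upper_child l h j c"
  with assms(3) have "z \<in> closed_segment (vertex_pos l (h, j)) (vertex_pos l (h - 1, c))"
    by (simp add: segment_convex_hull)
  from upper_segment_strip_point[OF child this] show ?thesis
    using child e unfolding strip_edge_def by blast
next
  fix h j c assume e: "e = {(h, j), (h + 1, c)}" and child: "lower_child l h j c"
  with assms(3) have "z \<in> closed_segment (vertex_pos l (h, j)) (vertex_pos l (h + 1, c))"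
    by (simp add: segment_convex_hull)
  from lower_segment_strip_point[OF child this] show ?thesis
    using child e unfolding strip_edge_def by blast
next
  assume e: "e = {(int l, 1), (- int l, 1)}"
  with assms(3) have "z \<in> closed_segment (vertex_pos l (int l, 1)) (vertex_pos l (- int l, 1))"
    by (simp add: segment_convex_hull)
  from root_segment_Re[OF this] show ?thesis using e by blast
next
  fix j assume e: "e = {(0, 2 * j - 1), (0, 2 * j)}" and j: "1 \<le> j"
  with assms(3) have "z \<in> closed_segment (vertex_pos l (0, 2 * j - 1)) (vertex_pos l (0, 2 * j))"
    by (simp add: segment_convex_hull)
  from matching_segment_bounds[OF j assms(1) this] show ?thesis using j e by blast
qed

lemma H_segment_vertex:
  assumes "l \<ge> 1" "e \<in> H_edges l" "w \<in> H_verts l" "vertex_pos l w \<in> convex hull (vertex_pos l ` e)"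
  shows "vertex_pos l w \<in> vertex_pos l ` e"
  using assms(2) unfolding H_edges_iff
proof (elim disjE exE conjE)
  fix h j c assume "e = {(h, j), (h - 1, c)}" "upper_child l h j c"
  then show ?thesis using upper_segment_vertex assms(3,4) by (simp add: segment_convex_hull)
next
  fix h j c assume "e = {(h, j), (h + 1, c)}" "lower_child l h j c"
  then show ?thesis using lower_segment_vertex assms(3,4) by (simp add: segment_convex_hull)
next
  assume "e = {(int l, 1), (- int l, 1)}"
  then show ?thesis using root_segment_vertex assms(3,4) by (simp add: segment_convex_hull)
next
  fix j assume "e = {(0, 2 * j - 1), (0, 2 * j)}" "1 \<le> j"
  then show ?thesis using matching_segment_vertex assms by (simp add: segment_convex_hull)
qed

lemma strip_edges_inter:
  assumes "strip_edge l e a" "strip_edge l e' a" "e \<noteq> e'"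
    "z \<in> convex hull (vertex_pos l ` e)" "z \<in> convex hull (vertex_pos l ` e')"
  shows "z \<in> vertex_pos l ` H_verts l"
  using assms(1,2) unfolding strip_edge_def
proof (elim disjE exE conjE)
  fix h j c h' j' c'
  assume e: "upper_child l h j c" "e = {(h, j), (h - 1, c)}" "a = h - 1"
    and e': "upper_child l h' j' c'" "e' = {(h', j'), (h' - 1, c')}" "a = h' - 1"
  have "h' = h" using e e' by simp
  moreover have "c \<noteq> c'"
    using assms(3) e e' upper_child_parent_eq[OF e(1)] upper_child_parent_eq[OF e'(1)] \<open>h' = h\<close> by auto
  ultimately show ?thesis
    using upper_segments_inter[of l h j c j' c' z] upper_segments_inter[of l h j' c' j c z]
      e e' assms(4,5) by (auto simp: segment_convex_hull linorder_neq_iff)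
next
  fix h j c h' j' c'
  assume e: "lower_child l h j c" "e = {(h, j), (h + 1, c)}" "a = h"
    and e': "lower_child l h' j' c'" "e' = {(h', j'), (h' + 1, c')}" "a = h'"
  have "h' = h" using e e' by simp
  moreover have "c \<noteq> c'"
    using assms(3) e e' upper_child_parent_eq[of l "- h" j c] upper_child_parent_eq[of l "- h'" j' c'] \<open>h' = h\<close>
    by (auto simp: lower_child_iff)
  ultimately show ?thesis
    using lower_segments_inter[of l h j c j' c' z] lower_segments_inter[of l h j' c' j c z]
      e e' assms(4,5) by (auto simp: segment_convex_hull linorder_neq_iff)
qed (auto simp: upper_child_def lower_child_def)

lemma H_segments_inter:
  assumes "l \<ge> 1" "e \<in> H_edges l" "e' \<in> H_edges l" "e \<noteq> e'"
    "z \<in> convex hull (vertex_pos l ` e)" "z \<in> convex hull (vertex_pos l ` e')"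
  shows "z \<in> vertex_pos l ` H_verts l"
  using H_segment_cases[OF assms(1,2,5)]
proof (elim disjE exE conjE)
  fix a assume a: "strip_edge l e a" "strip_point l z a"
  from H_segment_cases[OF assms(1,3,6)] show ?thesis
  proof (elim disjE exE conjE)
    fix b assume "strip_edge l e' b" "strip_point l z b"
    then show ?thesis
      using a strip_edges_inter[OF a(1) _ assms(4-6)] strip_point_two_strips by (cases "a = b") auto
  qed (use a strip_point_int_Im[of l z a 0] strip_point_Re_minus_one in auto)
next
  fix j assume j: "1 \<le> j" "e = {(0, 2 * j - 1), (0, 2 * j)}" "Im z = 0"
    "4 * real j - 3 \<le> Re z" "Re z \<le> 4 * real j - 1"
  from H_segment_cases[OF assms(1,3,6)] show ?thesis
  proof (elim disjE exE conjE)
    fix j' assume j': "e' = {(0, 2 * j' - 1), (0, 2 * j')}" "4 * real j' - 3 \<le> Re z" "Re z \<le> 4 * real j' - 1"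
    have "j \<noteq> j'"
    proof
      assume "j = j'"
      with j(2) j'(1) assms(4) show False by simp
    qed
    then have "real j + 1 \<le> real j' \<or> real j' + 1 \<le> real j" by linarith
    with j j' show ?thesis by linarith
  qed (use j strip_point_int_Im[of l z _ 0] in auto)
next
  assume r: "e = {(int l, 1), (- int l, 1)}" "Re z = -1"
  from H_segment_cases[OF assms(1,3,6)] show ?thesis
    using r assms(4) strip_point_Re_minus_one by auto
qed

lemma H_edge_doubleton:
  assumes "l \<ge> 1" "e \<in> H_edges l"
  shows "\<exists>u v. e = {u, v} \<and> u \<noteq> v"
  using assms(2) unfolding H_edges_iff
proof (elim disjE exE conjE)
  fix h j c assume "e = {(h, j), (h - 1, c)}"
  moreover have "(h, j) \<noteq> (h - 1, c)" by simp
  ultimately show ?thesis by blast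
next
  fix h j c assume "e = {(h, j), (h + 1, c)}"
  moreover have "(h, j) \<noteq> (h + 1, c)" by simp
  ultimately show ?thesis by blast
next
  assume "e = {(int l, 1), (- int l, 1)}"
  moreover have "(int l, 1) \<noteq> (- int l, 1::nat)" using assms(1) by simp
  ultimately show ?thesis by blast
next
  fix j assume "e = {(0, 2 * j - 1), (0, 2 * j)}" "1 \<le> j"
  moreover from \<open>1 \<le> j\<close> have "(0::int, 2 * j - 1) \<noteq> (0, 2 * j)" by simp
  ultimately show ?thesis by blast
qed

lemma planar_H:
  assumes "l \<ge> 1"
  shows "planar (H_verts l) (H_edges l)"
proof (rule planar_straight_line[OF inj_on_vertex_pos])
  fix e assume e: "e \<in> H_edges l"
  from H_edge_doubleton[OF assms e] show "\<exists>u v. e = {u, v} \<and> u \<noteq> v \<and> u \<in> H_verts l \<and> v \<in> H_verts l"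
    using H_edge_subset_H_verts[OF assms e] by blast
  show "convex hull (vertex_pos l ` e) \<inter> vertex_pos l ` H_verts l \<subseteq> vertex_pos l ` e"
    using H_segment_vertex[OF assms e] by blast
next
  show "convex hull (vertex_pos l ` e) \<inter> convex hull (vertex_pos l ` e') \<subseteq> vertex_pos l ` H_verts l"
    if "e \<in> H_edges l" "e' \<in> H_edges l" "e \<noteq> e'" for e e'
    using H_segments_inter[OF assms that] by blast
qed

theorem lemma1:
  fixes l :: nat
  assumes "l \<ge> 1"
  shows "regular 3 (H_verts l) (H_edges l)
       \<and> planar (H_verts l) (H_edges l)
       \<and> k_edge_connected 2 (H_verts l) (H_edges l)
       \<and> card (H_verts l) = 2 ^ (l + 1) + 2 ^ l - 2"
proof (intro conjI)
  show "regular 3 (H_verts l) (H_edges l)" using assms by (rule regular_H)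
  show "planar (H_verts l) (H_edges l)" using assms by (rule planar_H)
  have "2 ^ 1 \<le> (2::nat) ^ l" using assms by (rule power_increasing) simp
  then have "2 \<le> card (H_verts l)" using card_H_verts[of l] by simp
  then show "k_edge_connected 2 (H_verts l) (H_edges l)"
    by (rule k_edge_connected_2I[OF finite_H_edges[OF assms] _ connected_H H_edge_not_bridge[OF assms]])
  show "card (H_verts l) = 2 ^ (l + 1) + 2 ^ l - 2" by (rule card_H_verts)
qed

end
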